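(* Let $n\ge2$, $q_1,q_2\in\mathbb{C}$ with $q_1q_2\ne0$ and $q=-q_2/q_1$ not a root of unity, and put $a=q/(1+q)$, $b=1/(1+q)$. Let $\overline{G}$ be the Zariski closure in $\mathrm{GL}_{n-1}(\mathbb{C})$ of $\rho(B_n)$, matrices being taken with respect to the basis $f_1,\dots,f_{n-1}$ of $\mathbf{F}$. (a) If $q_1^{n-2}q_2$ is not a root of unity, then for each $i=1,\dots,n-1$, $\overline{G}$ contains the one-parameter subgroup $H_i$ consisting of the matrices \[(1-\delta_{i,1})b(1-z)e_{i,i-1}+z\,e_{ii}+(1-\delta_{i,n-1})a(1-z)e_{i,i+1}+E(i),\qquad z\in\mathbb{C}\setminus\{0\}.\] (b) If $q_1^{n-2}q_2$ is a root of unity, then for each $i=1,\dots,n-1$, $\overline{G}$ contains the one-parameter subgroup $K_i$ consisting of the matrices \[(1-\delta_{i,1})b(w-w^{2-n})e_{i,i-1}+w^{2-n}e_{ii}+(1-\delta_{i,n-1})a(w-w^{2-n})e_{i,i+1}+w\,E(i),\qquad w\in\mathbb{C}\setminus\{0\}.\]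
   Context: $B_n$ is Artin's braid group with generators $\sigma_1,\dots,\sigma_{n-1}$. $\mathbf{E}=\mathbb{C}^n$ with basis $e_1,\dots,e_n$ carries the generalized Burau representation $\sigma_ie_j=q_1e_j$ ($j\ne i,i+1$), $\sigma_ie_{i+1}=-q_2e_i$, $\sigma_ie_i=(q_1+q_2)e_i+q_1e_{i+1}$. Let $f_i=q_2e_i+q_1e_{i+1}$ ($1\le i\le n-1$), $\mathbf{F}=\mathrm{span}(f_1,\dots,f_{n-1})$ (a $B_n$-submodule), and $\rho:B_n\to\mathrm{GL}(\mathbf{F})\cong\mathrm{GL}_{n-1}(\mathbb{C})$ the resulting representation, with matrices whose $j$th column is the coordinate vector of the image of $f_j$. Here $e_{ij}$ ($1\le i,j\le n-1$) denote the standard matrix units in $(n-1)\times(n-1)$ matrices, $E(i)=I_{n-1}-e_{ii}$, and $\delta$ is the Kronecker delta (terms with indices outside $1,\dots,n-1$ are absent). *)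

theory Defs
  imports "Jordan_Normal_Form.Determinant"
begin

(* Matrices are Jordan_Normal_Form complex matrices of size (n-1) x (n-1).
   Paper indices 1..n-1 correspond to 0-based JNF indices 0..n-2; the
   helper functions below take 1-based (paper) indices. *)

definition root_of_unity :: "complex \<Rightarrow> bool" where
  "root_of_unity x \<longleftrightarrow> (\<exists>k::nat. k > 0 \<and> x ^ k = 1)"

definition mat1 :: "nat \<Rightarrow> (nat \<Rightarrow> nat \<Rightarrow> complex) \<Rightarrow> complex mat" where
  "mat1 m f = mat m m (\<lambda>(r, c). f (r + 1) (c + 1))"

(* Generalized Burau action of sigma_i on E = C^n, vectors as coefficient
   functions on 1..n:  sigma_i e_j = q1 e_j (j \<noteq> i,i+1),
   sigma_i e_{i+1} = -q2 e_i, sigma_i e_i = (q1+q2) e_i + q1 e_{i+1}. *)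
definition burau_act :: "complex \<Rightarrow> complex \<Rightarrow> nat \<Rightarrow> (nat \<Rightarrow> complex) \<Rightarrow> (nat \<Rightarrow> complex)" where
  "burau_act q1 q2 i v = (\<lambda>k. if k = i then (q1 + q2) * v i - q2 * v (i + 1)
                             else if k = i + 1 then q1 * v i else q1 * v k)"

definition fvec :: "complex \<Rightarrow> complex \<Rightarrow> nat \<Rightarrow> (nat \<Rightarrow> complex)" where
  "fvec q1 q2 j = (\<lambda>k. if k = j then q2 else if k = j + 1 then q1 else 0)"

(* entry (r,c) (1-based) of rho(sigma_i) w.r.t. the basis f_1..f_{n-1};
   column c is the coordinate vector of sigma_i f_c *)
definition rho_entry :: "complex \<Rightarrow> complex \<Rightarrow> nat \<Rightarrow> nat \<Rightarrow> nat \<Rightarrow> complex" where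
  "rho_entry q1 q2 i r c =
     (if r = i then (if c + 1 = i then q1 else if c = i then q2 else if c = i + 1 then - q2 else 0)
      else if r = c then q1 else 0)"

definition rho_gen :: "nat \<Rightarrow> complex \<Rightarrow> complex \<Rightarrow> nat \<Rightarrow> complex mat" where
  "rho_gen n q1 q2 i = mat1 (n - 1) (rho_entry q1 q2 i)"

lemma rho_entry_correct:
  assumes "1 \<le> i" "i \<le> n - 1" "1 \<le> j" "j \<le> n - 1"
  shows "burau_act q1 q2 i (fvec q1 q2 j) =
         (\<lambda>k. \<Sum>r\<in>{1..n-1}. rho_entry q1 q2 i r j * fvec q1 q2 r k)"
proof
  fix k
  have "(\<Sum>r\<in>{1..n-1}. rho_entry q1 q2 i r j * fvec q1 q2 r k) =
        (\<Sum>r\<in>{1..n-1} \<inter> {i, j}. rho_entry q1 q2 i r j * fvec q1 q2 r k)"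
    by (rule sum.mono_neutral_right) (auto simp: rho_entry_def)
  also have "\<dots> = burau_act q1 q2 i (fvec q1 q2 j) k"
    using assms by (cases "i = j") (auto simp: Int_absorb1 rho_entry_def fvec_def burau_act_def algebra_simps)
  finally show "burau_act q1 q2 i (fvec q1 q2 j) k = (\<Sum>r\<in>{1..n-1}. rho_entry q1 q2 i r j * fvec q1 q2 r k)" by simp
qed

(* rho(B_n): the subgroup of GL_{n-1}(C) generated by the rho(sigma_i),
   i = 1..n-1, i.e. the closure of the identity under right multiplication
   by generators and by their inverses *)
inductive_set braid_image :: "nat \<Rightarrow> complex \<Rightarrow> complex \<Rightarrow> complex mat set"
  for n q1 q2 where
  one: "1\<^sub>m (n - 1) \<in> braid_image n q1 q2"
| gen: "A \<in> braid_image n q1 q2 \<Longrightarrow> 1 \<le> i \<Longrightarrow> i \<le> n - 1 \<Longrightarrow>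
        A * rho_gen n q1 q2 i \<in> braid_image n q1 q2"
| geninv: "A \<in> braid_image n q1 q2 \<Longrightarrow> 1 \<le> i \<Longrightarrow> i \<le> n - 1 \<Longrightarrow>
        B \<in> carrier_mat (n - 1) (n - 1) \<Longrightarrow> B * rho_gen n q1 q2 i = 1\<^sub>m (n - 1) \<Longrightarrow>
        A * B \<in> braid_image n q1 q2"

inductive_set poly_fun :: "nat \<Rightarrow> (complex mat \<Rightarrow> complex) set" for m where
  const: "(\<lambda>A. c) \<in> poly_fun m"
| entry: "r < m \<Longrightarrow> c < m \<Longrightarrow> (\<lambda>A. A $$ (r, c)) \<in> poly_fun m"
| add: "p \<in> poly_fun m \<Longrightarrow> p' \<in> poly_fun m \<Longrightarrow> (\<lambda>A. p A + p' A) \<in> poly_fun m"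
| mult: "p \<in> poly_fun m \<Longrightarrow> p' \<in> poly_fun m \<Longrightarrow> (\<lambda>A. p A * p' A) \<in> poly_fun m"

(* Zariski closure of S inside GL_m(C) (GL_m is open in M_m, so its closed
   subsets are traces of Zariski-closed subsets of M_m) *)
definition zariski_closure_GL :: "nat \<Rightarrow> complex mat set \<Rightarrow> complex mat set" where
  "zariski_closure_GL m S =
     {A \<in> carrier_mat m m. det A \<noteq> 0 \<and>
        (\<forall>p \<in> poly_fun m. (\<forall>B \<in> S. p B = 0) \<longrightarrow> p A = 0)}"

definition H_entry :: "nat \<Rightarrow> complex \<Rightarrow> complex \<Rightarrow> nat \<Rightarrow> complex \<Rightarrow> nat \<Rightarrow> nat \<Rightarrow> complex" where
  "H_entry n a b i z r c =
     (if r = i then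
        (if c + 1 = i \<and> i \<noteq> 1 then b * (1 - z)
         else if c = i then z
         else if c = i + 1 \<and> i \<noteq> n - 1 then a * (1 - z) else 0)
      else if r = c then 1 else 0)"

definition K_entry :: "nat \<Rightarrow> complex \<Rightarrow> complex \<Rightarrow> nat \<Rightarrow> complex \<Rightarrow> nat \<Rightarrow> nat \<Rightarrow> complex" where
  "K_entry n a b i w r c =
     (if r = i then
        (if c + 1 = i \<and> i \<noteq> 1 then b * (w - w powi (2 - int n))
         else if c = i then w powi (2 - int n)
         else if c = i + 1 \<and> i \<noteq> n - 1 then a * (w - w powi (2 - int n)) else 0)
      else if r = c then w else 0)"

end

theory Submission
  imports Defs "HOL-Computational_Algebra.Polynomial" "HOL-Library.Infinite_Set"
begin

(* With q2 = -q q1, every generator is a scalar multiple rho(sigma_i) = q1 H_i(-q) of a point of the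
   one-parameter subgroup H_i, and H_i(z) H_i(z') = H_i(z z').  The product H_1(-q) ... H_(n-1)(-q)
   shifts the basis f_1, ..., f_(n-1) cyclically up to a twist, and its n-th power is q^n.  Hence
   rho(B_n) contains c^t q1^k H_i((-q)^k) for all t, k, where c = (q1^(n-1) q)^n = (-q1^(n-2) q2)^n.
   A polynomial in the matrix entries, restricted to a curve whose entries are Laurent polynomials,
   is a Laurent polynomial, so it vanishes on the whole curve once it vanishes at infinitely many
   points.
   (a) If c is not a root of unity, the points x = c^t q1^k put the curve x H_i((-q)^k) into the
   closure, in particular H_i((-q)^k); as -q is not a root of unity, all of H_i follows.
   (b) If (q1^(n-2) q2)^N = 1, then K_i(w) = w H_i(w^(1-n)) lies in rho(B_n) for w = q1^(N t), and
   q1^N is not a root of unity. *)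

lemma root_of_unityI: "0 < k \<Longrightarrow> x ^ k = 1 \<Longrightarrow> root_of_unity x"
  unfolding root_of_unity_def by blast

lemma root_of_unity_power_iff:
  assumes "0 < k"
  shows "root_of_unity (x ^ k) \<longleftrightarrow> root_of_unity x"
proof
  assume "root_of_unity (x ^ k)"
  then obtain j where "0 < j" "(x ^ k) ^ j = 1" by (auto simp: root_of_unity_def)
  then show "root_of_unity x"
    using assms by (intro root_of_unityI[of "k * j"]) (auto simp: power_mult)
next
  assume "root_of_unity x"
  then obtain j where "0 < j" "x ^ j = 1" by (auto simp: root_of_unity_def)
  then show "root_of_unity (x ^ k)"
    by (metis root_of_unityI power_mult mult.commute power_one)
qed

lemma root_of_unity_minus_iff: "root_of_unity (- x) \<longleftrightarrow> root_of_unity x"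
  using root_of_unity_power_iff[of 2 "- x"] root_of_unity_power_iff[of 2 x] by simp

lemma add_one_neq_0_if_not_root_of_unity: "\<not> root_of_unity q \<Longrightarrow> 1 + q \<noteq> 0"
  using root_of_unityI[of 2 "- 1"] by (auto simp: add_eq_0_iff)

lemma infinite_range_scaled_power:
  fixes x d :: complex
  assumes "x \<noteq> 0" "\<not> root_of_unity x" "d \<noteq> 0"
  shows "infinite (range (\<lambda>k::nat. d * x ^ k))"
proof (rule range_inj_infinite, rule injI)
  have power_eq: "x ^ k = x ^ l \<Longrightarrow> k \<le> l \<Longrightarrow> k = l" for k l
  proof -
    assume "x ^ k = x ^ l" "k \<le> l"
    moreover have "x ^ l = x ^ k * x ^ (l - k)"
      using \<open>k \<le> l\<close> by (simp flip: power_add)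
    ultimately have "x ^ k * x ^ (l - k) = x ^ k * 1" by simp
    then have "x ^ (l - k) = 1" using assms(1) by simp
    then show "k = l" using assms(2) \<open>k \<le> l\<close> root_of_unityI[of "l - k" x] by fastforce
  qed
  fix k l assume "d * x ^ k = d * x ^ l"
  then have "x ^ k = x ^ l" using assms(3) by simp
  then show "k = l" using power_eq[of k l] power_eq[of l k] by (metis nat_le_linear)
qed

lemma powi_one_minus:
  assumes "1 \<le> n"
  shows "(w :: 'a :: division_ring) powi (1 - int n) = inverse (w ^ (n - 1))"
proof -
  have "1 - int n = - int (n - 1)" using assms by simp
  then show ?thesis by (simp only: power_int_minus power_int_of_nat)
qed

lemma mat_eq_by_unit_vec:
  fixes A B :: "'a :: semiring_1 mat"
  assumes A: "A \<in> carrier_mat m m" and B: "B \<in> carrier_mat m m"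
    and eq: "\<And>j. j < m \<Longrightarrow> A *\<^sub>v unit_vec m j = B *\<^sub>v unit_vec m j"
  shows "A = B"
proof (rule mat_col_eqI)
  fix j assume "j < dim_col B"
  then have "j < m" using B by simp
  moreover have "col C j = C *\<^sub>v unit_vec m j" if "C \<in> carrier_mat m m" for C :: "'a mat"
    using col_mult2[OF that one_carrier_mat \<open>j < m\<close>] \<open>j < m\<close> right_mult_one_mat[OF that] by simp
  ultimately show "col A j = col B j" using A B eq by simp
qed (use A B in auto)

lemma smult_smult_mat: "a \<cdot>\<^sub>m (b \<cdot>\<^sub>m A) = (a * b :: 'a :: semigroup_mult) \<cdot>\<^sub>m A"
  by (rule eq_matI) (auto simp: mult.assoc)

lemma one_smult_mat: "(1 :: 'a :: monoid_mult) \<cdot>\<^sub>m A = A"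
  by (rule eq_matI) auto

lemma pow_one_mat: "1\<^sub>m m ^\<^sub>m k = (1\<^sub>m m :: 'a :: semiring_1 mat)"
  by (induction k) auto

lemma smult_mat_mult_vec:
  assumes "A \<in> carrier_mat nr nc" "v \<in> carrier_vec nc"
  shows "(c \<cdot>\<^sub>m A) *\<^sub>v v = c \<cdot>\<^sub>v (A *\<^sub>v v :: 'a :: comm_semiring_0 vec)"
  by (rule eq_vecI) (use assms in auto)

lemma pow_mat_mult_vec:
  assumes "A \<in> carrier_mat m m" "v \<in> carrier_vec m"
  shows "(A ^\<^sub>m k) *\<^sub>v v = ((\<lambda>w. A *\<^sub>v w) ^^ k) v"
  using assms(2)
proof (induction k arbitrary: v)
  case (Suc k)
  have "(A ^\<^sub>m Suc k) *\<^sub>v v = (A ^\<^sub>m k) *\<^sub>v (A *\<^sub>v v)"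
    using assoc_mult_mat_vec[OF pow_carrier_mat[OF assms(1)] assms(1) Suc.prems] by simp
  also have "\<dots> = ((\<lambda>w. A *\<^sub>v w) ^^ k) (A *\<^sub>v v)"
    using Suc.IH assms(1) Suc.prems by simp
  finally show ?case by (simp only: funpow_Suc_right comp_apply)
qed (use assms in simp)

lemma smult_pow_mat:
  assumes A: "A \<in> carrier_mat m m"
  shows "(x \<cdot>\<^sub>m A) ^\<^sub>m k = x ^ k \<cdot>\<^sub>m (A ^\<^sub>m k :: 'a :: comm_ring_1 mat)"
proof (induction k)
  case (Suc k)
  have "(x \<cdot>\<^sub>m A) ^\<^sub>m Suc k = (x ^ k \<cdot>\<^sub>m A ^\<^sub>m k) * (x \<cdot>\<^sub>m A)"
    using Suc by simp
  also have "\<dots> = x ^ k \<cdot>\<^sub>m (A ^\<^sub>m k * (x \<cdot>\<^sub>m A))"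
    by (rule mult_smult_assoc_mat[OF pow_carrier_mat[OF A] smult_carrier_mat[OF A]])
  also have "\<dots> = x ^ k \<cdot>\<^sub>m (x \<cdot>\<^sub>m (A ^\<^sub>m k * A))"
    by (simp only: mult_smult_distrib[OF pow_carrier_mat[OF A] A])
  also have "\<dots> = x ^ Suc k \<cdot>\<^sub>m (A ^\<^sub>m Suc k)"
    by (simp only: smult_smult_mat pow_mat.simps power_Suc mult.commute)
  finally show ?case .
qed (simp add: one_smult_mat)

lemma foldr_mult_carrier_mat:
  "\<forall>i \<in> set xs. M i \<in> carrier_mat m m \<Longrightarrow> foldr (\<lambda>i A. M i * A) xs (1\<^sub>m m) \<in> carrier_mat m m"
  by (induction xs) auto

lemma foldr_smult_mat:
  assumes "\<forall>i \<in> set xs. M i \<in> carrier_mat m m"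
  shows "foldr (\<lambda>i A. (c \<cdot>\<^sub>m M i) * A) xs (1\<^sub>m m) =
         c ^ length xs \<cdot>\<^sub>m (foldr (\<lambda>i A. M i * A) xs (1\<^sub>m m) :: 'a :: comm_ring_1 mat)"
  using assms
proof (induction xs)
  case (Cons x xs)
  then have "M x \<in> carrier_mat m m" "foldr (\<lambda>i A. M i * A) xs (1\<^sub>m m) \<in> carrier_mat m m"
    using foldr_mult_carrier_mat by auto
  with Cons show ?case
    by (simp add: mult_smult_assoc_mat[of _ m m] mult_smult_distrib[of _ m m] smult_smult_mat mult.commute)
qed (simp add: one_smult_mat)

section \<open>Laurent polynomial functions\<close>

definition laurent_fun :: "(complex \<Rightarrow> complex) \<Rightarrow> bool" where
  "laurent_fun f \<longleftrightarrow> (\<exists>Q N. \<forall>x. x \<noteq> 0 \<longrightarrow> x ^ N * f x = poly Q x)"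

lemma laurent_fun_const: "laurent_fun (\<lambda>x. c)"
  unfolding laurent_fun_def by (rule exI[of _ "[:c:]"], rule exI[of _ 0]) simp

lemma laurent_fun_powi: "laurent_fun (\<lambda>x. x powi k)"
proof (cases "0 \<le> k")
  case True
  then have "x ^ 0 * x powi k = poly (monom 1 (nat k)) x" for x :: complex
    by (simp add: poly_monom power_int_def)
  then show ?thesis unfolding laurent_fun_def by blast
next
  case False
  then have "x ^ nat (- k) * x powi k = poly 1 x" if "x \<noteq> 0" for x :: complex
    using that by (simp add: power_int_def power_mult_distrib[symmetric])
  then show ?thesis unfolding laurent_fun_def by blast
qed

lemma laurent_fun_id: "laurent_fun (\<lambda>x. x)"
  using laurent_fun_powi[of 1] by simp

lemma laurent_fun_add:
  assumes "laurent_fun f" "laurent_fun g"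
  shows "laurent_fun (\<lambda>x. f x + g x)"
proof -
  obtain Q N R M where f: "\<And>x. x \<noteq> 0 \<Longrightarrow> x ^ N * f x = poly Q x"
    and g: "\<And>x. x \<noteq> 0 \<Longrightarrow> x ^ M * g x = poly R x"
    using assms unfolding laurent_fun_def by blast
  have "x ^ (N + M) * (f x + g x) = poly (monom 1 M * Q + monom 1 N * R) x" if "x \<noteq> 0" for x
  proof -
    have "x ^ (N + M) * (f x + g x) = x ^ M * (x ^ N * f x) + x ^ N * (x ^ M * g x)"
      by (simp add: power_add algebra_simps)
    then show ?thesis by (simp add: f g that poly_monom)
  qed
  then show ?thesis unfolding laurent_fun_def by blast
qed

lemma laurent_fun_mult:
  assumes "laurent_fun f" "laurent_fun g"
  shows "laurent_fun (\<lambda>x. f x * g x)"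
proof -
  obtain Q N R M where f: "\<And>x. x \<noteq> 0 \<Longrightarrow> x ^ N * f x = poly Q x"
    and g: "\<And>x. x \<noteq> 0 \<Longrightarrow> x ^ M * g x = poly R x"
    using assms unfolding laurent_fun_def by blast
  have "x ^ (N + M) * (f x * g x) = poly (Q * R) x" if "x \<noteq> 0" for x
  proof -
    have "x ^ (N + M) * (f x * g x) = (x ^ N * f x) * (x ^ M * g x)"
      by (simp add: power_add algebra_simps)
    then show ?thesis by (simp add: f g that)
  qed
  then show ?thesis unfolding laurent_fun_def by blast
qed

lemma laurent_fun_diff:
  assumes "laurent_fun f" "laurent_fun g"
  shows "laurent_fun (\<lambda>x. f x - g x)"
proof -
  have "laurent_fun (\<lambda>x. f x + (- 1) * g x)"
    by (intro laurent_fun_add laurent_fun_mult laurent_fun_const assms)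
  then show ?thesis by simp
qed

lemma laurent_fun_if: "laurent_fun f \<Longrightarrow> laurent_fun g \<Longrightarrow> laurent_fun (\<lambda>x. if P then f x else g x)"
  by (cases P) simp_all

lemmas laurent_fun_intros =
  laurent_fun_const laurent_fun_id laurent_fun_powi laurent_fun_add laurent_fun_mult
  laurent_fun_diff laurent_fun_if

lemma laurent_fun_poly_fun:
  assumes "p \<in> poly_fun m" and "\<And>r c. r < m \<Longrightarrow> c < m \<Longrightarrow> laurent_fun (\<lambda>x. F x $$ (r, c))"
  shows "laurent_fun (\<lambda>x. p (F x))"
  using assms(1)
proof induction
  case (add p p')
  show ?case by (rule laurent_fun_add[OF add.IH])
next
  case (mult p p')
  show ?case by (rule laurent_fun_mult[OF mult.IH])
qed (simp_all add: laurent_fun_const assms(2))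

lemma laurent_fun_eq_0:
  assumes "laurent_fun f" "infinite S" "0 \<notin> S" "\<forall>s\<in>S. f s = 0" "x \<noteq> 0"
  shows "f x = 0"
proof -
  obtain Q N where f: "\<And>x. x \<noteq> 0 \<Longrightarrow> x ^ N * f x = poly Q x"
    using assms(1) unfolding laurent_fun_def by blast
  have "S \<subseteq> {x. poly Q x = 0}"
  proof
    fix s assume "s \<in> S"
    then have "s \<noteq> 0" "f s = 0" using assms(3,4) by auto
    then show "s \<in> {x. poly Q x = 0}" using f[of s] by simp
  qed
  then have "Q = 0" using poly_roots_finite[of Q] assms(2) finite_subset by blast
  then show ?thesis using f[OF assms(5)] assms(5) by simp
qed

section \<open>Zariski closure\<close>

definition zariski_hull :: "nat \<Rightarrow> complex mat set \<Rightarrow> complex mat set" where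
  "zariski_hull m S =
     {A \<in> carrier_mat m m. \<forall>p \<in> poly_fun m. (\<forall>B \<in> S. p B = 0) \<longrightarrow> p A = 0}"

lemma zariski_closure_GL_iff:
  "A \<in> zariski_closure_GL m S \<longleftrightarrow> A \<in> zariski_hull m S \<and> det A \<noteq> 0"
  unfolding zariski_closure_GL_def zariski_hull_def by blast

lemma subset_zariski_hull: "S \<subseteq> carrier_mat m m \<Longrightarrow> S \<subseteq> zariski_hull m S"
  unfolding zariski_hull_def by blast

lemma laurent_curve_in_zariski_hull:
  assumes laurent: "\<And>r c. r < m \<Longrightarrow> c < m \<Longrightarrow> laurent_fun (\<lambda>x. F x $$ (r, c))"
    and "F x \<in> carrier_mat m m" "x \<noteq> 0"
    and "infinite S" "0 \<notin> S" "F ` S \<subseteq> zariski_hull m T"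
  shows "F x \<in> zariski_hull m T"
  unfolding zariski_hull_def
proof (intro CollectI conjI ballI impI)
  fix p assume "p \<in> poly_fun m" "\<forall>B\<in>T. p B = 0"
  moreover have "laurent_fun (\<lambda>x. p (F x))"
    using laurent_fun_poly_fun[OF \<open>p \<in> poly_fun m\<close> laurent] .
  ultimately show "p (F x) = 0"
    using assms(3-6) by (intro laurent_fun_eq_0[where S = S]) (auto simp: zariski_hull_def)
qed fact

section \<open>The image of the braid group\<close>

lemma braid_image_carrier: "A \<in> braid_image n q1 q2 \<Longrightarrow> A \<in> carrier_mat (n - 1) (n - 1)"
  by (induction rule: braid_image.induct) (auto simp: rho_gen_def mat1_def)

lemma rho_gen_carrier [simp]: "rho_gen n q1 q2 i \<in> carrier_mat (n - 1) (n - 1)"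
  by (simp add: rho_gen_def mat1_def)

lemma braid_image_mult:
  assumes A: "A \<in> braid_image n q1 q2" and "B \<in> braid_image n q1 q2"
  shows "A * B \<in> braid_image n q1 q2"
  using \<open>B \<in> braid_image n q1 q2\<close>
proof induction
  case one
  then show ?case using A braid_image_carrier[OF A] by simp
next
  case (gen B i)
  have "A * (B * rho_gen n q1 q2 i) = A * B * rho_gen n q1 q2 i"
    using assoc_mult_mat[OF braid_image_carrier[OF A] braid_image_carrier[OF gen.hyps(1)] rho_gen_carrier]
    by simp
  then show ?case using gen braid_image.gen by simp
next
  case (geninv B i C)
  have "A * (B * C) = A * B * C"
    using assoc_mult_mat[OF braid_image_carrier[OF A] braid_image_carrier[OF geninv.hyps(1)] geninv.hyps(4)]
    by simp
  then show ?case using geninv braid_image.geninv by simp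
qed

lemma rho_gen_in_braid_image:
  assumes "1 \<le> i" "i \<le> n - 1"
  shows "rho_gen n q1 q2 i \<in> braid_image n q1 q2"
proof -
  have "1\<^sub>m (n - 1) * rho_gen n q1 q2 i \<in> braid_image n q1 q2"
    using braid_image.gen[OF braid_image.one assms] .
  then show ?thesis using left_mult_one_mat[OF rho_gen_carrier] by simp
qed

lemma braid_image_pow:
  assumes "A \<in> braid_image n q1 q2"
  shows "A ^\<^sub>m k \<in> braid_image n q1 q2"
proof (induction k)
  case 0
  then show ?case using braid_image.one braid_image_carrier[OF assms] by simp
next
  case (Suc k)
  then show ?case using braid_image_mult[OF _ assms] by simp
qed

lemma braid_image_foldr:
  assumes "set xs \<subseteq> {1..n - 1}"
  shows "foldr (\<lambda>i A. rho_gen n q1 q2 i * A) xs (1\<^sub>m (n - 1)) \<in> braid_image n q1 q2"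
  using assms
proof (induction xs)
  case Nil
  then show ?case using braid_image.one by simp
next
  case (Cons i xs)
  then show ?case using braid_image_mult rho_gen_in_braid_image[of i n q1 q2] by simp
qed

section \<open>The one-parameter subgroups\<close>

definition H_mat :: "nat \<Rightarrow> complex \<Rightarrow> complex \<Rightarrow> nat \<Rightarrow> complex \<Rightarrow> complex mat" where
  "H_mat n a b i z = mat1 (n - 1) (H_entry n a b i z)"

lemma H_mat_carrier [simp]: "H_mat n a b i z \<in> carrier_mat (n - 1) (n - 1)"
  by (simp add: H_mat_def mat1_def)

text \<open>Column vectors are modelled as sequences on the 1-based indices \<open>1..m\<close>, padded with zeros
  at \<open>0\<close> and \<open>m + 1\<close>, so that \<open>H\<^sub>i\<close> acts by one formula also in the boundary rows \<open>i = 1\<close> and \<open>i = m\<close>.\<close>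

definition vec1 :: "nat \<Rightarrow> (nat \<Rightarrow> complex) \<Rightarrow> complex vec" where
  "vec1 m v = vec m (\<lambda>k. v (k + 1))"

definition zero_padded :: "nat \<Rightarrow> (nat \<Rightarrow> complex) \<Rightarrow> bool" where
  "zero_padded m v \<longleftrightarrow> v 0 = 0 \<and> v (m + 1) = 0"

definition unit_seq :: "nat \<Rightarrow> nat \<Rightarrow> complex" where
  "unit_seq j = (\<lambda>k. if k = j then 1 else 0)"

definition H_seq :: "complex \<Rightarrow> complex \<Rightarrow> nat \<Rightarrow> complex \<Rightarrow> (nat \<Rightarrow> complex) \<Rightarrow> nat \<Rightarrow> complex" where
  "H_seq a b i z v = v(i := b * (1 - z) * v (i - 1) + z * v i + a * (1 - z) * v (i + 1))"

lemma vec1_carrier [simp]: "vec1 m v \<in> carrier_vec m"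
  by (simp add: vec1_def)

lemma vec1_unit_seq: "vec1 m (unit_seq (Suc j)) = unit_vec m j"
  by (auto simp: vec1_def unit_seq_def unit_vec_def)

lemma zero_padded_unit_seq: "1 \<le> j \<Longrightarrow> j \<le> m \<Longrightarrow> zero_padded m (unit_seq j)"
  by (simp add: zero_padded_def unit_seq_def)

lemma zero_padded_H_seq: "zero_padded m v \<Longrightarrow> 1 \<le> i \<Longrightarrow> i \<le> m \<Longrightarrow> zero_padded m (H_seq a b i z v)"
  by (simp add: zero_padded_def H_seq_def)

lemma H_seq_H_seq:
  assumes "1 \<le> i"
  shows "H_seq a b i z (H_seq a b i z' v) = H_seq a b i (z * z') v"
proof -
  have "i - 1 \<noteq> i" "i + 1 \<noteq> i" using assms by auto
  moreover have "b * (1 - z) * x + z * (b * (1 - z') * x + z' * y + a * (1 - z') * u) + a * (1 - z) * u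
      = b * (1 - z * z') * x + z * z' * y + a * (1 - z * z') * u" for x y u
    by (simp add: algebra_simps)
  ultimately show ?thesis by (simp add: H_seq_def)
qed

lemma H_mat_mult_vec1:
  assumes i: "1 \<le> i" "i \<le> n - 1" and v: "zero_padded (n - 1) v"
  shows "H_mat n a b i z *\<^sub>v vec1 (n - 1) v = vec1 (n - 1) (H_seq a b i z v)"
proof (rule eq_vecI)
  fix r assume "r < dim_vec (vec1 (n - 1) (H_seq a b i z v))"
  then have r: "r < n - 1" by (simp add: vec1_def)
  have "(H_mat n a b i z *\<^sub>v vec1 (n - 1) v) $ r =
      (\<Sum>l\<in>{0..<n - 1}. H_entry n a b i z (r + 1) (l + 1) * v (l + 1))"
    using r by (simp add: H_mat_def mat1_def vec1_def scalar_prod_def row_def)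
  also have "\<dots> = H_seq a b i z v (r + 1)"
  proof (cases "r + 1 = i")
    case False
    then have "(\<Sum>l\<in>{0..<n - 1}. H_entry n a b i z (r + 1) (l + 1) * v (l + 1))
        = (\<Sum>l\<in>{0..<n - 1}. if l = r then v (r + 1) else 0)"
      by (intro sum.cong) (auto simp: H_entry_def)
    then show ?thesis using False r by (simp add: H_seq_def)
  next
    case True
    have "(\<Sum>l\<in>{0..<n - 1}. H_entry n a b i z (r + 1) (l + 1) * v (l + 1))
        = (\<Sum>l\<in>{0..<n - 1}. (if l = i - 2 then (if 2 \<le> i then b * (1 - z) * v (i - 1) else 0) else 0)
             + (if l = r then z * v i else 0) + (if l = i then a * (1 - z) * v (i + 1) else 0))"
      using True r by (intro sum.cong) (auto simp: H_entry_def)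
    also have "\<dots> = (if 2 \<le> i then b * (1 - z) * v (i - 1) else 0) + z * v i
        + (if i < n - 1 then a * (1 - z) * v (i + 1) else 0)"
      using True r by (simp add: sum.distrib) linarith
    also have "\<dots> = H_seq a b i z v (r + 1)"
    proof -
      have "(if 2 \<le> i then b * (1 - z) * v (i - 1) else 0) = b * (1 - z) * v (i - 1)"
        using True v by (cases "i = 1") (auto simp: zero_padded_def)
      moreover have "(if i < n - 1 then a * (1 - z) * v (i + 1) else 0) = a * (1 - z) * v (i + 1)"
        using True r v by (cases "i = n - 1") (auto simp: zero_padded_def)
      ultimately show ?thesis using True by (simp add: H_seq_def)
    qed
    finally show ?thesis .
  qed
  finally show "(H_mat n a b i z *\<^sub>v vec1 (n - 1) v) $ r = vec1 (n - 1) (H_seq a b i z v) $ r"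
    using r by (simp add: vec1_def)
qed (simp add: vec1_def H_mat_def mat1_def)

lemma H_mat_mult:
  assumes i: "1 \<le> i" "i \<le> n - 1"
  shows "H_mat n a b i z * H_mat n a b i z' = H_mat n a b i (z * z')"
proof (rule mat_eq_by_unit_vec)
  fix j assume "j < n - 1"
  then have pad: "zero_padded (n - 1) (unit_seq (Suc j))" by (simp add: zero_padded_unit_seq)
  have "(H_mat n a b i z * H_mat n a b i z') *\<^sub>v unit_vec (n - 1) j
      = H_mat n a b i z *\<^sub>v (H_mat n a b i z' *\<^sub>v vec1 (n - 1) (unit_seq (Suc j)))"
    unfolding vec1_unit_seq by (rule assoc_mult_mat_vec[OF H_mat_carrier H_mat_carrier unit_vec_carrier])
  also have "\<dots> = vec1 (n - 1) (H_seq a b i z (H_seq a b i z' (unit_seq (Suc j))))"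
    using H_mat_mult_vec1[OF i pad] H_mat_mult_vec1[OF i zero_padded_H_seq[OF pad i]] by simp
  also have "\<dots> = H_mat n a b i (z * z') *\<^sub>v unit_vec (n - 1) j"
    using H_mat_mult_vec1[OF i pad] H_seq_H_seq[OF i(1)] by (simp add: vec1_unit_seq)
  finally show "(H_mat n a b i z * H_mat n a b i z') *\<^sub>v unit_vec (n - 1) j
      = H_mat n a b i (z * z') *\<^sub>v unit_vec (n - 1) j" .
qed (rule mult_carrier_mat H_mat_carrier)+

lemma H_mat_1: "H_mat n a b i 1 = 1\<^sub>m (n - 1)"
  by (rule eq_matI) (auto simp: H_mat_def mat1_def H_entry_def)

lemma H_mat_pow: "1 \<le> i \<Longrightarrow> i \<le> n - 1 \<Longrightarrow> H_mat n a b i z ^\<^sub>m k = H_mat n a b i (z ^ k)"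
  by (induction k) (simp_all add: H_mat_1 H_mat_mult mult.commute carrier_matD[OF H_mat_carrier])

lemma det_H_mat_nonzero:
  assumes "1 \<le> i" "i \<le> n - 1" "z \<noteq> 0"
  shows "det (H_mat n a b i z) \<noteq> 0"
proof -
  have "det (H_mat n a b i z) * det (H_mat n a b i (1 / z)) = 1"
    using det_mult[OF H_mat_carrier H_mat_carrier, symmetric] assms by (simp add: H_mat_mult H_mat_1)
  then show ?thesis by auto
qed

lemma laurent_fun_H_mat:
  assumes "r < n - 1" "c < n - 1"
  shows "laurent_fun (\<lambda>z. H_mat n a b i z $$ (r, c))"
proof -
  have "laurent_fun (\<lambda>z. H_entry n a b i z (r + 1) (c + 1))"
    unfolding H_entry_def by (intro laurent_fun_intros)
  then show ?thesis using assms by (simp add: H_mat_def mat1_def)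
qed

lemma K_mat_eq_smult_H_mat:
  assumes "w \<noteq> 0"
  shows "mat1 (n - 1) (K_entry n a b i w) = w \<cdot>\<^sub>m H_mat n a b i (w powi (1 - int n))"
proof -
  have "w powi (2 - int n) = w * w powi (1 - int n)"
    using power_int_add[of w 1 "1 - int n"] assms by simp
  then show ?thesis
    by (intro eq_matI) (auto simp: mat1_def K_entry_def H_mat_def H_entry_def algebra_simps)
qed

lemma laurent_fun_K_mat:
  assumes "r < n - 1" "c < n - 1"
  shows "laurent_fun (\<lambda>w. mat1 (n - 1) (K_entry n a b i w) $$ (r, c))"
proof -
  have "laurent_fun (\<lambda>w. K_entry n a b i w (r + 1) (c + 1))"
    unfolding K_entry_def by (intro laurent_fun_intros)
  then show ?thesis using assms by (simp add: mat1_def)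
qed

section \<open>The Coxeter element\<close>

definition sigma_seq :: "complex \<Rightarrow> nat \<Rightarrow> (nat \<Rightarrow> complex) \<Rightarrow> nat \<Rightarrow> complex" where
  "sigma_seq q i v = v(i := v (i - 1) - q * v i + q * v (i + 1))"

lemma H_seq_eq_sigma_seq: "1 + q \<noteq> 0 \<Longrightarrow> H_seq (q / (1 + q)) (1 / (1 + q)) i (- q) = sigma_seq q i"
  by (auto simp: fun_eq_iff H_seq_def sigma_seq_def field_simps)

text \<open>Up to the factor \<open>q\<^sub>1\<^sup>n\<^sup>-\<^sup>1\<close> this is \<open>\<rho>(\<sigma>\<^sub>1\<cdots>\<sigma>\<^sub>n\<^sub>-\<^sub>1)\<close>.\<close>

definition coxeter_mat :: "nat \<Rightarrow> complex \<Rightarrow> complex mat" where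
  "coxeter_mat n q = foldr (\<lambda>i A. H_mat n (q / (1 + q)) (1 / (1 + q)) i (- q) * A) [1..<n] (1\<^sub>m (n - 1))"

lemma coxeter_mat_carrier: "coxeter_mat n q \<in> carrier_mat (n - 1) (n - 1)"
  unfolding coxeter_mat_def by (intro foldr_mult_carrier_mat ballI H_mat_carrier)

lemma zero_padded_foldr_H_seq:
  "set xs \<subseteq> {1..m} \<Longrightarrow> zero_padded m v \<Longrightarrow> zero_padded m (foldr (\<lambda>i. H_seq a b i z) xs v)"
  by (induction xs) (auto simp: zero_padded_H_seq)

lemma foldr_H_mat_mult_vec1:
  assumes "set xs \<subseteq> {1..n - 1}" "zero_padded (n - 1) v"
  shows "foldr (\<lambda>i A. H_mat n a b i z * A) xs (1\<^sub>m (n - 1)) *\<^sub>v vec1 (n - 1) v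
       = vec1 (n - 1) (foldr (\<lambda>i. H_seq a b i z) xs v)"
  using assms
proof (induction xs)
  case (Cons i xs)
  let ?M = "foldr (\<lambda>i A. H_mat n a b i z * A) xs (1\<^sub>m (n - 1))"
  have i: "1 \<le> i" "i \<le> n - 1" using Cons.prems by auto
  have "(H_mat n a b i z * ?M) *\<^sub>v vec1 (n - 1) v = H_mat n a b i z *\<^sub>v (?M *\<^sub>v vec1 (n - 1) v)"
    by (rule assoc_mult_mat_vec[OF H_mat_carrier foldr_mult_carrier_mat vec1_carrier])
      (intro ballI H_mat_carrier)
  also have "\<dots> = vec1 (n - 1) (H_seq a b i z (foldr (\<lambda>i. H_seq a b i z) xs v))"
    using Cons H_mat_mult_vec1[OF i zero_padded_foldr_H_seq] by simp
  finally show ?case by simp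
qed simp

lemma coxeter_mat_mult_vec1:
  assumes "1 + q \<noteq> 0" "zero_padded (n - 1) v"
  shows "coxeter_mat n q *\<^sub>v vec1 (n - 1) v = vec1 (n - 1) (foldr (sigma_seq q) [1..<n] v)"
proof -
  have "set [1..<n] \<subseteq> {1..n - 1}" by auto
  from foldr_H_mat_mult_vec1[OF this assms(2), of "q / (1 + q)" "1 / (1 + q)" "- q"] show ?thesis
    using assms(1) by (simp add: coxeter_mat_def H_seq_eq_sigma_seq)
qed

lemma foldr_sigma_seq_unit_seq:
  assumes j: "1 \<le> j" "j < n - 1" and k: "1 \<le> k" "k \<le> n"
  shows "foldr (sigma_seq q) [k..<n] (unit_seq j) =
    (if j + 2 \<le> k then unit_seq j
     else if k = j + 1 then (\<lambda>l. unit_seq j l + unit_seq (j + 1) l) else unit_seq (j + 1))"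
  using k(2,1)
proof (induction k rule: inc_induct)
  case base
  have "j + 2 \<le> n" using j by linarith
  then show ?case by simp
next
  case (step k)
  then have "[k..<n] = k # [Suc k..<n]" by (simp add: upt_conv_Cons)
  with step j show ?case by (auto simp: sigma_seq_def unit_seq_def fun_eq_iff)
qed

definition geometric_seq :: "nat \<Rightarrow> complex \<Rightarrow> nat \<Rightarrow> complex" where
  "geometric_seq n q = (\<lambda>l. if 1 \<le> l \<and> l \<le> n - 1 then - (q ^ (n - l)) else 0)"

lemma foldr_sigma_seq_last_unit_seq:
  assumes n: "2 \<le> n" and k: "1 \<le> k" "k \<le> n"
  shows "foldr (sigma_seq q) [k..<n] (unit_seq (n - 1)) =
    (if k = n then unit_seq (n - 1) else (\<lambda>l. if k \<le> l then geometric_seq n q l else 0))"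
  using k(2,1)
proof (induction k rule: inc_induct)
  case (step k)
  then have "[k..<n] = k # [Suc k..<n]" by (simp add: upt_conv_Cons)
  moreover have "q * q ^ (n - Suc k) = q ^ (n - k)"
    using step.hyps by (metis Suc_diff_Suc power_Suc)
  ultimately show ?case
    using step n by (auto simp: sigma_seq_def unit_seq_def geometric_seq_def fun_eq_iff)
qed simp

lemma foldr_sigma_seq_geometric_seq:
  assumes n: "2 \<le> n" and k: "2 \<le> k" "k \<le> n"
  shows "foldr (sigma_seq q) [k..<n] (geometric_seq n q) = (\<lambda>l. if k \<le> l then 0 else geometric_seq n q l)"
  using k(2,1)
proof (induction k rule: inc_induct)
  case (step k)
  then have "[k..<n] = k # [Suc k..<n]" by (simp add: upt_conv_Cons)
  moreover have "q * q ^ (n - k) = q ^ (n - (k - 1))"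
    using step.hyps step.prems by (simp add: Suc_diff_le flip: power_Suc)
  ultimately show ?case
    using step n by (auto simp: sigma_seq_def geometric_seq_def fun_eq_iff)
qed (auto simp: geometric_seq_def fun_eq_iff)

lemma coxeter_mat_unit_vec:
  assumes "1 + q \<noteq> 0" "Suc j < n - 1"
  shows "coxeter_mat n q *\<^sub>v unit_vec (n - 1) j = unit_vec (n - 1) (Suc j)"
  using coxeter_mat_mult_vec1[OF assms(1) zero_padded_unit_seq[of "Suc j" "n - 1"]]
    foldr_sigma_seq_unit_seq[of "Suc j" n 1 q] assms(2)
  by (simp add: vec1_unit_seq)

lemma coxeter_mat_last_unit_vec:
  assumes "1 + q \<noteq> 0" "2 \<le> n"
  shows "coxeter_mat n q *\<^sub>v unit_vec (n - 1) (n - 2) = vec1 (n - 1) (geometric_seq n q)"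
proof -
  have "unit_vec (n - 1) (n - 2) = vec1 (n - 1) (unit_seq (n - 1))"
    using assms(2) vec1_unit_seq[of "n - 1" "n - 2"] by (simp add: Suc_diff_Suc numeral_2_eq_2)
  moreover have "foldr (sigma_seq q) [1..<n] (unit_seq (n - 1)) = geometric_seq n q"
    using foldr_sigma_seq_last_unit_seq[OF assms(2), of 1 q] assms(2)
    by (auto simp: geometric_seq_def fun_eq_iff)
  ultimately show ?thesis
    using coxeter_mat_mult_vec1[OF assms(1) zero_padded_unit_seq[of "n - 1" "n - 1"]] assms(2) by simp
qed

lemma coxeter_mat_geometric_seq:
  assumes "1 + q \<noteq> 0" "2 \<le> n"
  shows "coxeter_mat n q *\<^sub>v vec1 (n - 1) (geometric_seq n q) = q ^ n \<cdot>\<^sub>v unit_vec (n - 1) 0"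
proof -
  have "[1..<n] = 1 # [2..<n]" using assms(2) by (simp add: upt_conv_Cons numeral_2_eq_2)
  moreover have "q * q ^ (n - 1) = q ^ n"
    using assms(2) by (simp flip: power_Suc)
  ultimately have "foldr (sigma_seq q) [1..<n] (geometric_seq n q) = (\<lambda>l. q ^ n * unit_seq 1 l)"
    using foldr_sigma_seq_geometric_seq[OF assms(2) order.refl assms(2), of q] assms(2)
    by (auto simp: sigma_seq_def geometric_seq_def unit_seq_def fun_eq_iff)
  moreover have "zero_padded (n - 1) (geometric_seq n q)"
    by (simp add: zero_padded_def geometric_seq_def)
  ultimately show ?thesis
    using coxeter_mat_mult_vec1[OF assms(1)] by (auto simp: vec1_def unit_seq_def)
qed

lemma funpow_mult_mat_vec_smult:
  assumes "A \<in> carrier_mat m m" "v \<in> carrier_vec m"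
  shows "((\<lambda>w. A *\<^sub>v w) ^^ k) (c \<cdot>\<^sub>v v) = c \<cdot>\<^sub>v ((\<lambda>w. A *\<^sub>v w) ^^ k) (v :: 'a :: field vec)"
  using pow_mat_mult_vec[OF assms(1)] mult_mat_vec[OF pow_carrier_mat[OF assms(1)] assms(2)] assms(2)
  by (simp flip: pow_mat_mult_vec[OF assms(1)])

lemma coxeter_mat_pow:
  assumes q: "1 + q \<noteq> 0" and n: "2 \<le> n"
  shows "coxeter_mat n q ^\<^sub>m n = q ^ n \<cdot>\<^sub>m 1\<^sub>m (n - 1)"
proof (rule mat_eq_by_unit_vec)
  let ?P = "coxeter_mat n q"
  let ?f = "\<lambda>w. ?P *\<^sub>v w"
  have shift: "(?f ^^ s) (unit_vec (n - 1) j) = unit_vec (n - 1) (j + s)" if "j + s < n - 1" for j s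
    using that
  proof (induction s arbitrary: j)
    case (Suc s)
    then show ?case
      using coxeter_mat_unit_vec[OF q, of "j + s" n] by simp
  qed simp
  fix j assume j: "j < n - 1"
  have "?P ^\<^sub>m n *\<^sub>v unit_vec (n - 1) j = (?f ^^ n) (unit_vec (n - 1) j)"
    by (rule pow_mat_mult_vec[OF coxeter_mat_carrier unit_vec_carrier])
  also have "\<dots> = (?f ^^ j) ((?f ^^ 2) ((?f ^^ (n - 2 - j)) (unit_vec (n - 1) j)))"
  proof -
    have "j + (2 + (n - 2 - j)) = n" using j by linarith
    then show ?thesis by (metis funpow_add comp_apply)
  qed
  also have "(?f ^^ (n - 2 - j)) (unit_vec (n - 1) j) = unit_vec (n - 1) (n - 2)"
    using shift[of j "n - 2 - j"] j n by simp
  also have "(?f ^^ 2) (unit_vec (n - 1) (n - 2)) = q ^ n \<cdot>\<^sub>v unit_vec (n - 1) 0"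
    using coxeter_mat_last_unit_vec[OF q n] coxeter_mat_geometric_seq[OF q n]
    by (simp add: numeral_2_eq_2)
  also have "(?f ^^ j) (q ^ n \<cdot>\<^sub>v unit_vec (n - 1) 0) = q ^ n \<cdot>\<^sub>v unit_vec (n - 1) j"
    using funpow_mult_mat_vec_smult[OF coxeter_mat_carrier unit_vec_carrier] shift[of 0 j] j by simp
  also have "\<dots> = (q ^ n \<cdot>\<^sub>m 1\<^sub>m (n - 1)) *\<^sub>v unit_vec (n - 1) j"
    by (simp add: smult_mat_mult_vec[OF one_carrier_mat unit_vec_carrier])
  finally show "?P ^\<^sub>m n *\<^sub>v unit_vec (n - 1) j = (q ^ n \<cdot>\<^sub>m 1\<^sub>m (n - 1)) *\<^sub>v unit_vec (n - 1) j" .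
qed (use coxeter_mat_carrier in auto)

section \<open>Elements of the braid image\<close>

lemma rho_gen_eq_smult_H_mat:
  assumes "q1 * q = - q2" "1 + q \<noteq> 0"
  shows "rho_gen n q1 q2 i = q1 \<cdot>\<^sub>m H_mat n (q / (1 + q)) (1 / (1 + q)) i (- q)"
proof -
  have "q2 = - q1 * q" using assms(1) by simp
  then show ?thesis using assms(2)
    by (intro eq_matI) (auto simp: rho_gen_def H_mat_def mat1_def rho_entry_def H_entry_def field_simps)
qed

lemma foldr_rho_gen_eq_smult_coxeter_mat:
  assumes "q1 * q = - q2" "1 + q \<noteq> 0"
  shows "foldr (\<lambda>i A. rho_gen n q1 q2 i * A) [1..<n] (1\<^sub>m (n - 1)) = q1 ^ (n - 1) \<cdot>\<^sub>m coxeter_mat n q"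
proof -
  have "\<forall>i \<in> set [1..<n]. H_mat n (q / (1 + q)) (1 / (1 + q)) i (- q) \<in> carrier_mat (n - 1) (n - 1)"
    by (intro ballI H_mat_carrier)
  from foldr_smult_mat[OF this, of q1] show ?thesis
    unfolding coxeter_mat_def rho_gen_eq_smult_H_mat[OF assms] by simp
qed

text \<open>The element \<open>(\<rho>(\<sigma>\<^sub>1\<cdots>\<sigma>\<^sub>n\<^sub>-\<^sub>1)\<^sup>n)\<^sup>t \<rho>(\<sigma>\<^sub>i)\<^sup>k\<close>.\<close>

lemma smult_H_mat_in_braid_image:
  assumes n: "2 \<le> n" and q: "q1 * q = - q2" "1 + q \<noteq> 0" and i: "1 \<le> i" "i \<le> n - 1"
  shows "(((q1 ^ (n - 1) * q) ^ n) ^ t * q1 ^ k) \<cdot>\<^sub>m H_mat n (q / (1 + q)) (1 / (1 + q)) i ((- q) ^ k)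
    \<in> braid_image n q1 q2"
proof -
  let ?H = "H_mat n (q / (1 + q)) (1 / (1 + q)) i"
  let ?c = "(q1 ^ (n - 1) * q) ^ n"
  let ?R = "foldr (\<lambda>i A. rho_gen n q1 q2 i * A) [1..<n] (1\<^sub>m (n - 1))"
  have "?R ^\<^sub>m n = (q1 ^ (n - 1)) ^ n \<cdot>\<^sub>m coxeter_mat n q ^\<^sub>m n"
    unfolding foldr_rho_gen_eq_smult_coxeter_mat[OF q] by (rule smult_pow_mat[OF coxeter_mat_carrier])
  also have "\<dots> = ?c \<cdot>\<^sub>m 1\<^sub>m (n - 1)"
    by (simp add: coxeter_mat_pow[OF q(2) n] smult_smult_mat power_mult_distrib)
  finally have "?R ^\<^sub>m n = ?c \<cdot>\<^sub>m 1\<^sub>m (n - 1)" .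
  then have central: "(?R ^\<^sub>m n) ^\<^sub>m t = ?c ^ t \<cdot>\<^sub>m 1\<^sub>m (n - 1)"
    using smult_pow_mat[OF one_carrier_mat] by (simp add: pow_one_mat)
  have generator: "rho_gen n q1 q2 i ^\<^sub>m k = q1 ^ k \<cdot>\<^sub>m ?H ((- q) ^ k)"
    using rho_gen_eq_smult_H_mat[OF q] smult_pow_mat[OF H_mat_carrier] H_mat_pow[OF i] by simp
  have "(?R ^\<^sub>m n) ^\<^sub>m t * rho_gen n q1 q2 i ^\<^sub>m k \<in> braid_image n q1 q2"
    by (intro braid_image_mult braid_image_pow braid_image_foldr rho_gen_in_braid_image i) auto
  also have "(?R ^\<^sub>m n) ^\<^sub>m t * rho_gen n q1 q2 i ^\<^sub>m k = (?c ^ t * q1 ^ k) \<cdot>\<^sub>m ?H ((- q) ^ k)"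
    unfolding central generator
    using mult_smult_assoc_mat[OF one_carrier_mat smult_carrier_mat[OF H_mat_carrier]]
      left_mult_one_mat[OF smult_carrier_mat[OF H_mat_carrier]]
    by (simp add: smult_smult_mat)
  finally show ?thesis .
qed

lemma power_diff_one_mult_eq:
  fixes q1 q q2 :: "'a :: comm_ring_1"
  assumes "2 \<le> n" "q1 * q = - q2"
  shows "q1 ^ (n - 1) * q = - (q1 ^ (n - 2) * q2)"
proof -
  have "n - 1 = Suc (n - 2)" using assms(1) by arith
  then have "q1 ^ (n - 1) * q = q1 ^ (n - 2) * (q1 * q)" by (simp only: power_Suc mult_ac)
  then show ?thesis using assms(2) by simp
qed

lemma braid_image_subset_zariski_hull: "braid_image n q1 q2 \<subseteq> zariski_hull (n - 1) (braid_image n q1 q2)"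
  by (intro subset_zariski_hull subsetI braid_image_carrier)

lemma H_mat_power_in_zariski_hull:
  assumes n: "2 \<le> n" and q1: "q1 \<noteq> 0" and q: "q1 * q = - q2" "q \<noteq> 0" "1 + q \<noteq> 0"
    and nr: "\<not> root_of_unity (q1 ^ (n - 2) * q2)" and i: "1 \<le> i" "i \<le> n - 1"
  shows "H_mat n (q / (1 + q)) (1 / (1 + q)) i ((- q) ^ k) \<in> zariski_hull (n - 1) (braid_image n q1 q2)"
proof -
  let ?M = "H_mat n (q / (1 + q)) (1 / (1 + q)) i ((- q) ^ k)"
  define c where "c = (q1 ^ (n - 1) * q) ^ n"
  have "c \<noteq> 0" using q1 q(2) by (simp add: c_def)
  moreover have "\<not> root_of_unity c"
    using nr n power_diff_one_mult_eq[OF n q(1)]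
    by (simp add: c_def root_of_unity_power_iff root_of_unity_minus_iff)
  ultimately have c: "c \<noteq> 0" "\<not> root_of_unity c" by blast+
  have "1 \<cdot>\<^sub>m ?M \<in> zariski_hull (n - 1) (braid_image n q1 q2)"
  proof (rule laurent_curve_in_zariski_hull[where F = "\<lambda>x. x \<cdot>\<^sub>m ?M" and x = 1
        and S = "range (\<lambda>t. q1 ^ k * c ^ t)"])
    show "laurent_fun (\<lambda>x. (x \<cdot>\<^sub>m ?M) $$ (r, s))" if "r < n - 1" "s < n - 1" for r s
      using that carrier_matD[OF H_mat_carrier]
      by (simp add: laurent_fun_mult laurent_fun_id laurent_fun_const)
    show "1 \<cdot>\<^sub>m ?M \<in> carrier_mat (n - 1) (n - 1)"
      by (rule smult_carrier_mat[OF H_mat_carrier])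
    show "infinite (range (\<lambda>t. q1 ^ k * c ^ t))"
      using c q1 by (intro infinite_range_scaled_power) auto
    show "0 \<notin> range (\<lambda>t. q1 ^ k * c ^ t)"
      using c q1 by auto
    show "(\<lambda>x. x \<cdot>\<^sub>m ?M) ` range (\<lambda>t. q1 ^ k * c ^ t) \<subseteq> zariski_hull (n - 1) (braid_image n q1 q2)"
      using smult_H_mat_in_braid_image[OF n q(1) q(3) i] braid_image_subset_zariski_hull[of n q1 q2]
      by (auto simp: c_def mult.commute)
  qed simp
  then show ?thesis by (simp add: one_smult_mat)
qed

lemma H_mat_in_zariski_closure:
  assumes n: "2 \<le> n" and q1: "q1 \<noteq> 0" and q: "q1 * q = - q2" "q \<noteq> 0" "\<not> root_of_unity q"
    and nr: "\<not> root_of_unity (q1 ^ (n - 2) * q2)" and i: "1 \<le> i" "i \<le> n - 1" and z: "z \<noteq> 0"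
  shows "H_mat n (q / (1 + q)) (1 / (1 + q)) i z \<in> zariski_closure_GL (n - 1) (braid_image n q1 q2)"
proof -
  let ?H = "H_mat n (q / (1 + q)) (1 / (1 + q)) i"
  have "?H z \<in> zariski_hull (n - 1) (braid_image n q1 q2)"
  proof (rule laurent_curve_in_zariski_hull[where F = ?H and S = "range (\<lambda>k. 1 * (- q) ^ k)"])
    show "infinite (range (\<lambda>k. 1 * (- q) ^ k))"
      using q(2,3) by (intro infinite_range_scaled_power) (auto simp: root_of_unity_minus_iff)
    show "0 \<notin> range (\<lambda>k. 1 * (- q) ^ k)"
      using q(2) by auto
    show "?H ` range (\<lambda>k. 1 * (- q) ^ k) \<subseteq> zariski_hull (n - 1) (braid_image n q1 q2)"
      using H_mat_power_in_zariski_hull[OF n q1 q(1,2) add_one_neq_0_if_not_root_of_unity[OF q(3)] nr i]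
      by auto
  qed (use z laurent_fun_H_mat H_mat_carrier in blast)+
  then show ?thesis
    using det_H_mat_nonzero[OF i z] by (simp add: zariski_closure_GL_iff)
qed

lemma power_mult_power_eq_1_if_root_of_unity:
  fixes q1 q q2 :: "'a :: comm_ring_1"
  assumes n: "2 \<le> n" and q: "q1 * q = - q2" and N: "(q1 ^ (n - 2) * q2) ^ N = 1"
  shows "(q1 ^ (N * t)) ^ (n - 1) * (- q) ^ (N * t) = 1"
proof -
  have "(q1 ^ (N * t)) ^ (n - 1) = (q1 ^ (n - 1)) ^ (N * t)"
    by (metis power_mult mult.commute)
  then have "(q1 ^ (N * t)) ^ (n - 1) * (- q) ^ (N * t) = (q1 ^ (n - 1) * (- q)) ^ (N * t)"
    by (simp only: power_mult_distrib)
  also have "\<dots> = ((q1 ^ (n - 2) * q2) ^ N) ^ t"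
    using power_diff_one_mult_eq[OF n q] by (simp add: power_mult)
  finally show ?thesis using N by simp
qed

lemma K_mat_power_in_braid_image:
  assumes n: "2 \<le> n" and q1: "q1 \<noteq> 0" and q: "q1 * q = - q2" "1 + q \<noteq> 0"
    and N: "(q1 ^ (n - 2) * q2) ^ N = 1" and i: "1 \<le> i" "i \<le> n - 1"
  shows "mat1 (n - 1) (K_entry n (q / (1 + q)) (1 / (1 + q)) i ((q1 ^ N) ^ t)) \<in> braid_image n q1 q2"
proof -
  have "((q1 ^ N) ^ t) powi (1 - int n) = inverse (((q1 ^ N) ^ t) ^ (n - 1))"
    using n by (intro powi_one_minus) simp
  also have "\<dots> = (- q) ^ (N * t)"
    using inverse_unique[OF power_mult_power_eq_1_if_root_of_unity[OF n q(1) N, of t]]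
    by (simp add: power_mult)
  finally have "((q1 ^ N) ^ t) powi (1 - int n) = (- q) ^ (N * t)" .
  then show ?thesis
    using K_mat_eq_smult_H_mat[of "(q1 ^ N) ^ t"] smult_H_mat_in_braid_image[OF n q i, of 0 "N * t"] q1
    by (simp add: power_mult)
qed

lemma K_mat_in_zariski_closure:
  assumes n: "2 \<le> n" and q1: "q1 \<noteq> 0" and q: "q1 * q = - q2" "\<not> root_of_unity q"
    and r: "root_of_unity (q1 ^ (n - 2) * q2)" and i: "1 \<le> i" "i \<le> n - 1" and w: "w \<noteq> 0"
  shows "mat1 (n - 1) (K_entry n (q / (1 + q)) (1 / (1 + q)) i w) \<in> zariski_closure_GL (n - 1) (braid_image n q1 q2)"
proof -
  let ?K = "\<lambda>w. mat1 (n - 1) (K_entry n (q / (1 + q)) (1 / (1 + q)) i w)"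
  obtain N where N: "0 < N" "(q1 ^ (n - 2) * q2) ^ N = 1"
    using r by (auto simp: root_of_unity_def)
  have "\<not> root_of_unity (q1 ^ N)"
  proof
    assume "root_of_unity (q1 ^ N)"
    then obtain t where "0 < t" "(q1 ^ N) ^ t = 1" by (auto simp: root_of_unity_def)
    then have "(- q) ^ (N * t) = 1"
      using power_mult_power_eq_1_if_root_of_unity[OF n q(1) N(2), of t] by (simp add: power_mult)
    then show False
      using q(2) N(1) \<open>0 < t\<close> root_of_unityI[of "N * t" "- q"] root_of_unity_minus_iff by auto
  qed
  have "?K w \<in> zariski_hull (n - 1) (braid_image n q1 q2)"
  proof (rule laurent_curve_in_zariski_hull[where F = ?K and S = "range (\<lambda>t. 1 * (q1 ^ N) ^ t)"])
    show "infinite (range (\<lambda>t. 1 * (q1 ^ N) ^ t))"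
      using q1 \<open>\<not> root_of_unity (q1 ^ N)\<close> by (intro infinite_range_scaled_power) auto
    show "?K ` range (\<lambda>t. 1 * (q1 ^ N) ^ t) \<subseteq> zariski_hull (n - 1) (braid_image n q1 q2)"
      using K_mat_power_in_braid_image[OF n q1 q(1) add_one_neq_0_if_not_root_of_unity[OF q(2)] N(2) i]
        braid_image_subset_zariski_hull[of n q1 q2]
      by auto
  qed (use q1 w laurent_fun_K_mat in \<open>auto simp: mat1_def\<close>)
  moreover have "det (?K w) \<noteq> 0"
    using K_mat_eq_smult_H_mat[OF w] det_H_mat_nonzero[OF i, of "w powi (1 - int n)"] w
      carrier_matD[OF H_mat_carrier]
    by simp
  ultimately show ?thesis by (simp add: zariski_closure_GL_iff)
qed

theorem propositionA3:
  fixes n :: nat and q1 q2 :: complex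
  assumes "n \<ge> 2"
    and "q1 * q2 \<noteq> 0"
    and "\<not> root_of_unity (- q2 / q1)"
  defines "q \<equiv> - q2 / q1"
  defines "a \<equiv> q / (1 + q)"
  defines "b \<equiv> 1 / (1 + q)"
  defines "Gbar \<equiv> zariski_closure_GL (n - 1) (braid_image n q1 q2)"
  shows "(\<not> root_of_unity (q1 ^ (n - 2) * q2) \<longrightarrow>
            (\<forall>i \<in> {1..n-1}. {mat1 (n - 1) (H_entry n a b i z) | z. z \<noteq> 0} \<subseteq> Gbar))
       \<and> (root_of_unity (q1 ^ (n - 2) * q2) \<longrightarrow>
            (\<forall>i \<in> {1..n-1}. {mat1 (n - 1) (K_entry n a b i w) | w. w \<noteq> 0} \<subseteq> Gbar))"
proof -
  have q1: "q1 \<noteq> 0" and "q \<noteq> 0" using assms(2) by (auto simp: q_def)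
  moreover have "q1 * q = - q2" using q1 by (simp add: q_def)
  moreover have "\<not> root_of_unity q" using assms(3) by (simp add: q_def)
  ultimately show ?thesis
    unfolding Gbar_def a_def b_def
    using H_mat_in_zariski_closure[OF assms(1) q1] K_mat_in_zariski_closure[OF assms(1) q1]
    by (auto simp: H_mat_def)
qed

end
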